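(* Let $\mathfrak u(n)$ be the real vector space of skew-Hermitian $n\times n$ complex matrices with the Frobenius inner product $\langle a,b\rangle=\operatorname{Re}\operatorname{tr}(a^\dagger b)$ and norm $\|\cdot\|$, and let $g$ be a vector field on $\mathfrak u(n)$. For $z\in\mathfrak u(n)$ with distinct nonzero eigenvalues, write uniquely $g(z)=[L,z]+Pz$ with $L$ in the range of $K\mapsto[K,z]$ and $P$ commuting with $z$ (then $L$ is skew-Hermitian and $P$ Hermitian), write $L(z),P(z)$ for these, and set $M(z):=-L(z)+\tfrac12P(z)$ (so $M(z)^\dagger=L(z)+\tfrac12P(z)$ and $g(z)=M(z)^\dagger z+zM(z)$). Let $b_1,\dots,b_s$, $h>0$, and $z_0,z_1,Z_1,\dots,Z_s\in\mathfrak u(n)$, each $Z_i$ having distinct nonzero eigenvalues, satisfy \[ Z_i = z_0 + h\sum_{j=1}^{i-1}b_jg(Z_j) + \frac h2 b_ig(Z_i) - \frac{h^2}{4}b_i^2M(Z_i)^\dagger Z_iM(Z_i),\qquad z_1 = z_0 + h\sum_{i=1}^s b_ig(Z_i). \] Then \[ \tfrac12\|z_1\|^2 = \tfrac12\|z_0\|^2 - h\sum_{i=1}^s b_i\operatorname{tr}\bigl(Z_iP(Z_i)Z_i\bigr) - \frac{h^3}{4}\sum_{i=1}^s b_i^3\operatorname{tr}\bigl(M(Z_i)^\dagger Z_iP(Z_i)Z_iM(Z_i)\bigr). \] In particular, when $g(z)=[M(z)^\dagger,z]$, so that $P=0$, the Frobenius norm is conserved: $\|z_1\|=\|z_0\|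$.
   Context: $A^\dagger$ denotes the conjugate transpose; $[A,B]=AB-BA$. For $z$ with distinct nonzero eigenvalues, every matrix $K$ decomposes uniquely as $K=[L,z]+Pz$ with $L$ in the range of $X\mapsto[X,z]$ and $P$ in its kernel (matrices commuting with $z$); in the eigenbasis of $z$ this is the splitting of $K$ into off-diagonal and diagonal parts. *)

theory Defs
  imports "HOL-Analysis.Analysis"
begin

type_synonym 'n cmat = "complex^'n^'n"

definition cadj :: "'n::finite cmat \<Rightarrow> 'n cmat" where
  "cadj A = (\<chi> i j. cnj (A $ j $ i))"

definition comm :: "'n::finite cmat \<Rightarrow> 'n cmat \<Rightarrow> 'n cmat" where
  "comm A B = A ** B - B ** A"

definition skew_hermitian :: "'n::finite cmat \<Rightarrow> bool" where
  "skew_hermitian A \<longleftrightarrow> cadj A = - A"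

definition frob_inner :: "'n::finite cmat \<Rightarrow> 'n cmat \<Rightarrow> real" where
  "frob_inner A B = Re (trace (cadj A ** B))"

definition frob_norm :: "'n::finite cmat \<Rightarrow> real" where
  "frob_norm A = sqrt (frob_inner A A)"

definition is_eigenvalue :: "'n::finite cmat \<Rightarrow> complex \<Rightarrow> bool" where
  "is_eigenvalue A c \<longleftrightarrow> (\<exists>v. v \<noteq> 0 \<and> A *v v = c *s v)"

definition distinct_nonzero_eigs :: "'n::finite cmat \<Rightarrow> bool" where
  "distinct_nonzero_eigs A \<longleftrightarrow>
     card {c. is_eigenvalue A c} = CARD('n) \<and> \<not> is_eigenvalue A 0"

definition decomp :: "'n::finite cmat \<Rightarrow> 'n cmat \<Rightarrow> 'n cmat \<times> 'n cmat" where
  "decomp K z = (THE (L, P). L \<in> range (\<lambda>X. comm X z) \<and> comm P z = 0 \<and>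
                               K = comm L z + P ** z)"

definition Lpart :: "('n::finite cmat \<Rightarrow> 'n cmat) \<Rightarrow> 'n cmat \<Rightarrow> 'n cmat" where
  "Lpart g z = fst (decomp (g z) z)"

definition Ppart :: "('n::finite cmat \<Rightarrow> 'n cmat) \<Rightarrow> 'n cmat \<Rightarrow> 'n cmat" where
  "Ppart g z = snd (decomp (g z) z)"

definition Mpart :: "('n::finite cmat \<Rightarrow> 'n cmat) \<Rightarrow> 'n cmat \<Rightarrow> 'n cmat" where
  "Mpart g z = - Lpart g z + (1/2::real) *\<^sub>R Ppart g z"

end

theory Submission
  imports Defs
begin

text \<open>
  For skew-Hermitian \<open>z\<close> the map \<open>ad\<^sub>z X = [X,z]\<close> is skew-adjoint for the Frobenius inner
  product, so \<open>ker ad\<^sub>z\<^sup>2 = ker ad\<^sub>z\<close>; orthogonal projection onto the range of \<open>ad\<^sub>z\<^sup>2\<close> then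
  yields the splitting \<open>K = [L,z] + Pz\<close>, and uniqueness applied to the conjugate transpose
  of a splitting of a skew-Hermitian \<open>K\<close> shows that \<open>L\<close> is skew-Hermitian and \<open>P\<close> Hermitian.
  Hence \<open>g(z) = M\<^sup>\<dagger>z + zM\<close> with \<open>M + M\<^sup>\<dagger> = P\<close>.

  Writing each stage as \<open>Z\<^sub>i + E\<^sub>i = z\<^sub>0 + h \<Sum>\<^bsub>j<i\<^esub> b\<^sub>j g(Z\<^sub>j) + (h/2) b\<^sub>i g(Z\<^sub>i)\<close>, the squared norm of
  the partial sums telescopes to \<open>\<parallel>z\<^sub>1\<parallel>\<^sup>2 = \<parallel>z\<^sub>0\<parallel>\<^sup>2 + 2h\<Sum> b\<^sub>i\<langle>Z\<^sub>i + E\<^sub>i, g(Z\<^sub>i)\<rangle>\<close>, exactly as for the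
  implicit midpoint rule. Finally, by cyclicity of the trace,
  \<open>\<langle>Z, M\<^sup>\<dagger>Z + ZM\<rangle> = -tr(ZPZ)\<close> and \<open>\<langle>M\<^sup>\<dagger>ZM, M\<^sup>\<dagger>Z + ZM\<rangle> = -tr(M\<^sup>\<dagger>ZPZM)\<close>.
\<close>

lemma matrix_add_rdistrib: "(A + B) ** C = A ** C + B ** (C :: 'a::semiring_1^'n^'m)"
  by (simp add: matrix_matrix_mult_def vec_eq_iff distrib_right sum.distrib)

lemma matrix_diff_ldistrib: "C ** (A - B) = C ** A - C ** (B :: 'a::ring_1^'n^'m)"
  by (simp add: matrix_matrix_mult_def vec_eq_iff right_diff_distrib sum_subtractf)

lemma matrix_diff_rdistrib: "(A - B) ** C = A ** C - B ** (C :: 'a::ring_1^'n^'m)"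
  by (simp add: matrix_matrix_mult_def vec_eq_iff left_diff_distrib sum_subtractf)

lemma matrix_minus_left: "(- A) ** B = - (A ** (B :: 'a::ring_1^'n^'m))"
  by (simp add: matrix_matrix_mult_def vec_eq_iff sum_negf)

lemma matrix_minus_right: "A ** (- B) = - (A ** (B :: 'a::ring_1^'n^'m))"
  by (simp add: matrix_matrix_mult_def vec_eq_iff sum_negf)

lemma matrix_scaleR_left: "(r *\<^sub>R A) ** B = r *\<^sub>R (A ** (B :: 'a::real_algebra_1^'n^'m))"
  by (simp add: scalar_matrix_assoc)

lemma matrix_scaleR_right: "A ** (r *\<^sub>R B) = r *\<^sub>R (A ** (B :: 'a::real_algebra_1^'n^'m))"
  by (simp add: matrix_scalar_ac scalar_matrix_assoc)

lemma invertible_mult_left_eq_0_iff: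
  fixes A :: "'a::semiring_1^'n^'n"
  assumes "invertible A"
  shows "A ** B = 0 \<longleftrightarrow> B = 0"
  by (metis assms invertible_def matrix_mul_assoc matrix_mul_lid times0_right)

lemma invertible_mult_right_eq_0_iff:
  fixes A :: "'a::semiring_1^'n^'n"
  assumes "invertible A"
  shows "B ** A = 0 \<longleftrightarrow> B = 0"
  by (metis assms invertible_def matrix_mul_assoc matrix_mul_rid times0_left)

lemma invertible_if_not_eigenvalue_0:
  assumes "\<not> is_eigenvalue A 0"
  shows "invertible A"
proof -
  have "\<forall>x. A *v x = 0 \<longrightarrow> x = 0"
    using assms by (auto simp: is_eigenvalue_def)
  then show ?thesis
    by (simp add: invertible_left_inverse matrix_left_invertible_ker)
qed

lemma trace_minus: "trace (- A) = - trace (A :: 'a::ring_1^'n^'n)"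
  by (simp add: trace_def sum_negf)

lemma trace_mult_cycle: "trace (A ** B ** C) = trace (C ** A ** (B :: 'a::comm_semiring_1^'n^'n))"
  by (metis trace_mul_sym matrix_mul_assoc)

lemma trace_mult_sylvester:
  "trace (Z ** (B ** Z + Z ** A)) = trace (Z ** (A + B) ** (Z :: 'a::comm_ring_1^'n^'n))"
  using trace_mult_cycle[of Z A Z]
  by (simp add: matrix_add_ldistrib matrix_add_rdistrib trace_add matrix_mul_assoc add.commute)

lemma trace_sandwich_sylvester:
  "trace (B ** Z ** A ** (B ** Z + Z ** A)) = trace (B ** Z ** (A + B) ** Z ** (A :: 'a::comm_ring_1^'n^'n))"
  using trace_mul_sym[of "B ** Z" "A ** B ** Z"] trace_mul_sym[of "B ** Z ** B ** Z" A]
  by (simp add: matrix_add_ldistrib matrix_add_rdistrib trace_add matrix_mul_assoc add.commute)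

lemma cadj_mult: "cadj (A ** B) = cadj B ** cadj (A :: 'n::finite cmat)"
  by (simp add: cadj_def matrix_matrix_mult_def vec_eq_iff mult.commute)

lemma cadj_add: "cadj (A + B) = cadj A + cadj (B :: 'n::finite cmat)"
  by (simp add: cadj_def vec_eq_iff)

lemma cadj_diff: "cadj (A - B) = cadj A - cadj (B :: 'n::finite cmat)"
  by (simp add: cadj_def vec_eq_iff)

lemma cadj_minus: "cadj (- A) = - cadj (A :: 'n::finite cmat)"
  by (simp add: cadj_def vec_eq_iff)

lemma cadj_scaleR: "cadj (r *\<^sub>R A) = r *\<^sub>R cadj (A :: 'n::finite cmat)"
  by (simp add: cadj_def vec_eq_iff)

lemma cadj_cadj [simp]: "cadj (cadj A) = (A :: 'n::finite cmat)"
  by (simp add: cadj_def vec_eq_iff)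

lemma trace_cadj: "trace (cadj A) = cnj (trace (A :: 'n::finite cmat))"
  by (simp add: cadj_def trace_def)

lemmas matrix_algebra_simps =
  matrix_add_ldistrib matrix_add_rdistrib matrix_diff_ldistrib matrix_diff_rdistrib
  matrix_minus_left matrix_minus_right matrix_scaleR_left matrix_scaleR_right
  cadj_mult cadj_add cadj_diff cadj_minus cadj_scaleR

lemma frob_inner_eq_inner: "frob_inner A B = inner A (B :: 'n::finite cmat)"
  unfolding frob_inner_def trace_def cadj_def matrix_matrix_mult_def inner_vec_def
  by (simp add: inner_complex_def Re_sum) (rule sum.swap)

lemma frob_norm_eq_norm: "frob_norm A = norm (A :: 'n::finite cmat)"
  by (simp add: frob_norm_def frob_inner_eq_inner norm_eq_sqrt_inner)

lemma skew_hermitian_sandwich: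
  "skew_hermitian Z \<Longrightarrow> skew_hermitian (cadj M ** Z ** M)"
  unfolding skew_hermitian_def cadj_mult
  by (simp add: matrix_minus_left matrix_minus_right matrix_mul_assoc)

lemma inner_skew_hermitian_eq_trace:
  assumes "skew_hermitian W" "skew_hermitian G"
  shows "complex_of_real (inner W G) = - trace (W ** G)"
proof -
  have W: "cadj W = - W" and G: "cadj G = - G"
    using assms by (simp_all add: skew_hermitian_def)
  have "cnj (trace (W ** G)) = trace (G ** W)"
    unfolding trace_cadj[symmetric] cadj_mult W G matrix_minus_left matrix_minus_right by simp
  also have "\<dots> = trace (W ** G)"
    by (rule trace_mul_sym)
  finally have "cnj (trace (W ** G)) = trace (W ** G)" .
  moreover have "inner W G = - Re (trace (W ** G))"
    unfolding frob_inner_eq_inner[symmetric] frob_inner_def W matrix_minus_left trace_minus by simp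
  ultimately show ?thesis
    by (simp add: complex_eq_iff)
qed

lemma comm_linear: "linear (\<lambda>X. comm X Z)"
  by (rule linearI) (simp_all add: comm_def matrix_algebra_simps algebra_simps)

lemma inner_comm_skew_adjoint:
  assumes "skew_hermitian Z"
  shows "inner A (comm B Z) = - inner (comm A Z) B"
proof -
  have Z: "cadj Z = - Z" using assms by (simp add: skew_hermitian_def)
  have "inner A (comm B Z) = Re (trace (cadj A ** B ** Z) - trace (cadj A ** Z ** B))"
    unfolding frob_inner_eq_inner[symmetric] frob_inner_def comm_def
    by (simp add: matrix_diff_ldistrib trace_sub matrix_mul_assoc)
  moreover have "inner (comm A Z) B = Re (trace (cadj A ** Z ** B) - trace (Z ** cadj A ** B))"
    unfolding frob_inner_eq_inner[symmetric] frob_inner_def comm_def cadj_diff cadj_mult Z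
    by (simp add: matrix_diff_rdistrib matrix_minus_left matrix_minus_right trace_sub trace_minus
        matrix_mul_assoc)
  moreover have "trace (cadj A ** B ** Z) = trace (Z ** cadj A ** B)"
    by (rule trace_mult_cycle)
  ultimately show ?thesis
    by simp
qed

lemma comm_eq_0_if_comm_comm_eq_0:
  assumes "skew_hermitian Z" "comm (comm X Z) Z = 0"
  shows "comm X Z = 0"
proof -
  have "inner (comm X Z) (comm X Z) = - inner (comm (comm X Z) Z) X"
    by (rule inner_comm_skew_adjoint[OF assms(1)])
  then show ?thesis using assms(2) by simp
qed

definition ad_splitting :: "'n::finite cmat \<Rightarrow> 'n cmat \<Rightarrow> 'n cmat \<Rightarrow> 'n cmat \<Rightarrow> bool" where
  "ad_splitting K z L P \<longleftrightarrow>
     L \<in> range (\<lambda>X. comm X z) \<and> comm P z = 0 \<and> K = comm L z + P ** z"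

lemma ad_splitting_exists:
  assumes z: "skew_hermitian z" and inv: "invertible z"
  obtains L P where "ad_splitting K z L P"
proof -
  \<comment> \<open>project \<open>K\<close> onto the range of \<open>ad\<^sub>z\<^sup>2\<close>; the remainder \<open>q\<close> lies in \<open>ker ad\<^sub>z\<^sup>2 = ker ad\<^sub>z\<close>\<close>
  let ?ad2 = "\<lambda>X. comm (comm X z) z"
  have "linear ?ad2"
    using linear_compose[OF comm_linear comm_linear] by (simp add: o_def)
  then have sub: "subspace (range ?ad2)"
    by (rule linear_subspace_image[OF _ subspace_UNIV])
  obtain y q where y: "y \<in> span (range ?ad2)"
    and q: "\<And>w. w \<in> span (range ?ad2) \<Longrightarrow> orthogonal q w" and K: "K = y + q"
    using orthogonal_subspace_decomp_exists[of "range ?ad2" K] by metis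
  from y sub obtain W where W: "y = ?ad2 W"
  proof -
    from sub have "span (range ?ad2) = range ?ad2"
      by (simp only: span_eq_iff)
    with y have "y \<in> range ?ad2"
      by simp
    then show ?thesis
      using that by blast
  qed
  have ad2_self_adjoint: "inner A (?ad2 B) = inner (?ad2 A) B" for A B
    using inner_comm_skew_adjoint[OF z, of A "comm B z"] inner_comm_skew_adjoint[OF z, of "comm A z" B]
    by simp
  have "inner (?ad2 q) (?ad2 q) = inner q (?ad2 (?ad2 q))"
    by (simp add: ad2_self_adjoint)
  also have "\<dots> = 0"
    using q[of "?ad2 (?ad2 q)"] by (simp add: orthogonal_def span_base)
  finally have "comm q z = 0"
    using comm_eq_0_if_comm_comm_eq_0[OF z] by simp
  then have qz: "z ** q = q ** z"
    by (simp add: comm_def)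
  obtain z' where z': "z ** z' = mat 1" "z' ** z = mat 1"
    using inv by (auto simp: invertible_def)
  define P where "P = q ** z'"
  have Pz: "P ** z = q"
    by (simp add: P_def z' flip: matrix_mul_assoc)
  have "z ** P = q"
    by (simp add: P_def matrix_mul_assoc qz) (simp add: z' flip: matrix_mul_assoc)
  with Pz have "ad_splitting K z (comm W z) P"
    by (auto simp: ad_splitting_def comm_def K W)
  then show thesis ..
qed

lemma ad_splitting_unique:
  assumes z: "skew_hermitian z" and inv: "invertible z"
    and "ad_splitting K z L P" and "ad_splitting K z L' P'"
  shows "L = L' \<and> P = P'"
proof -
  obtain X X' where L: "L = comm X z" and L': "L' = comm X' z"
    and P: "P ** z = z ** P" and P': "P' ** z = z ** P'"
    and K: "K = comm L z + P ** z" and K': "K = comm L' z + P' ** z"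
    using assms(3,4) by (auto simp: ad_splitting_def comm_def)
  define E where "E = P - P'"
  have Ez: "E ** z = z ** E"
    by (simp add: E_def matrix_diff_ldistrib matrix_diff_rdistrib P P')
  have LL': "L - L' = comm (X - X') z"
    by (simp add: L L' comm_def matrix_diff_ldistrib matrix_diff_rdistrib)
  have comm_LL': "comm (L - L') z = - (E ** z)"
    using K K' by (simp add: E_def comm_def matrix_diff_ldistrib matrix_diff_rdistrib algebra_simps)
  have "comm (comm (L - L') z) z = 0"
    unfolding comm_LL' unfolding comm_def
    by (simp add: matrix_minus_left matrix_minus_right Ez flip: matrix_mul_assoc)
  then have comm_0: "comm (L - L') z = 0"
    by (rule comm_eq_0_if_comm_comm_eq_0[OF z])
  then have "L - L' = 0"
    using comm_eq_0_if_comm_comm_eq_0[OF z, of "X - X'"] by (simp add: LL')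
  moreover have "E ** z = 0"
    using comm_0 by (simp add: comm_LL')
  ultimately show ?thesis
    using invertible_mult_right_eq_0_iff[OF inv, of E] by (simp add: E_def)
qed

lemma decomp_eqI:
  assumes "skew_hermitian z" "invertible z" "ad_splitting K z L P"
  shows "decomp K z = (L, P)"
proof -
  have "decomp K z = (THE (L, P). ad_splitting K z L P)"
    by (simp add: decomp_def ad_splitting_def)
  also have "\<dots> = (L, P)"
    by (rule the_equality) (auto simp: assms(3) dest: ad_splitting_unique[OF assms])
  finally show ?thesis .
qed

lemma ad_splitting_decomp:
  assumes "skew_hermitian z" "invertible z"
  shows "ad_splitting K z (fst (decomp K z)) (snd (decomp K z))"
proof -
  obtain L P where "ad_splitting K z L P"
    using ad_splitting_exists[OF assms] .
  then show ?thesis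
    using decomp_eqI[OF assms] by simp
qed

lemma ad_splitting_cadj:
  assumes z: "skew_hermitian z" and K: "skew_hermitian K" and split: "ad_splitting K z L P"
  shows "ad_splitting K z (- cadj L) (cadj P)"
proof -
  have z': "cadj z = - z" and K': "cadj K = - K"
    using z K by (simp_all add: skew_hermitian_def)
  obtain X where L: "L = comm X z" and Pz: "P ** z = z ** P" and KLP: "K = comm L z + P ** z"
    using split by (auto simp: ad_splitting_def comm_def)
  have "cadj (P ** z) = cadj (z ** P)"
    using Pz by simp
  then have Pz': "cadj P ** z = z ** cadj P"
    by (simp add: cadj_mult z' matrix_minus_left matrix_minus_right)
  have "- cadj L = comm (- cadj X) z"
    by (simp add: L comm_def cadj_diff cadj_mult z' matrix_minus_left matrix_minus_right)
  moreover have "K = comm (- cadj L) z + cadj P ** z"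
  proof -
    have "K = - cadj (comm L z + P ** z)"
      using K' KLP by (metis cadj_cadj cadj_minus)
    also have "\<dots> = comm (- cadj L) z + cadj P ** z"
      by (simp add: comm_def cadj_add cadj_diff cadj_mult z' matrix_minus_left matrix_minus_right Pz')
    finally show ?thesis .
  qed
  ultimately show ?thesis
    using Pz' by (auto simp: ad_splitting_def comm_def)
qed

lemma decomp_cadj:
  assumes "skew_hermitian z" "invertible z" "skew_hermitian K"
  shows "cadj (fst (decomp K z)) = - fst (decomp K z)" "cadj (snd (decomp K z)) = snd (decomp K z)"
proof -
  have "decomp K z = (- cadj (fst (decomp K z)), cadj (snd (decomp K z)))"
    by (intro decomp_eqI ad_splitting_cadj ad_splitting_decomp assms)
  then show "cadj (fst (decomp K z)) = - fst (decomp K z)" "cadj (snd (decomp K z)) = snd (decomp K z)"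
    by (metis fst_conv snd_conv minus_minus)+
qed

context
  fixes g :: "'n::finite cmat \<Rightarrow> 'n cmat" and z :: "'n cmat"
  assumes z_skew: "skew_hermitian z" and z_inv: "invertible z" and g_skew: "skew_hermitian (g z)"
begin

lemma g_eq_Lpart_Ppart: "g z = comm (Lpart g z) z + Ppart g z ** z"
  and Ppart_commute: "Ppart g z ** z = z ** Ppart g z"
  using ad_splitting_decomp[OF z_skew z_inv, of "g z"]
  unfolding ad_splitting_def Lpart_def Ppart_def comm_def by auto

lemma Lpart_skew_hermitian: "cadj (Lpart g z) = - Lpart g z"
  and Ppart_hermitian: "cadj (Ppart g z) = Ppart g z"
  using decomp_cadj[OF z_skew z_inv g_skew] by (simp_all add: Lpart_def Ppart_def)

lemma Mpart_add_cadj: "Mpart g z + cadj (Mpart g z) = Ppart g z"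
proof -
  have "Mpart g z + cadj (Mpart g z) = (1/2 + 1/2::real) *\<^sub>R Ppart g z"
    unfolding Mpart_def cadj_add cadj_minus cadj_scaleR Lpart_skew_hermitian Ppart_hermitian
    by (simp only: scaleR_add_left) simp
  then show ?thesis
    by simp
qed

lemma g_eq_Mpart_sylvester: "g z = cadj (Mpart g z) ** z + z ** Mpart g z"
proof -
  have "cadj (Mpart g z) ** z + z ** Mpart g z
      = comm (Lpart g z) z + (1/2::real) *\<^sub>R (Ppart g z ** z + z ** Ppart g z)"
    by (simp add: Mpart_def comm_def cadj_add cadj_minus cadj_scaleR Lpart_skew_hermitian
        Ppart_hermitian matrix_algebra_simps algebra_simps)
  also have "\<dots> = g z"
    by (simp add: g_eq_Lpart_Ppart Ppart_commute flip: scaleR_2)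
  finally show ?thesis ..
qed

lemma inner_g_eq_trace_Ppart:
  "complex_of_real (inner z (g z)) = - trace (z ** Ppart g z ** z)"
  using inner_skew_hermitian_eq_trace[OF z_skew g_skew]
  by (simp add: g_eq_Mpart_sylvester trace_mult_sylvester Mpart_add_cadj)

lemma inner_sandwich_g_eq_trace_Ppart:
  "complex_of_real (inner (cadj (Mpart g z) ** z ** Mpart g z) (g z))
     = - trace (cadj (Mpart g z) ** z ** Ppart g z ** z ** Mpart g z)"
  using inner_skew_hermitian_eq_trace[OF skew_hermitian_sandwich[OF z_skew] g_skew]
  by (simp add: g_eq_Mpart_sylvester trace_sandwich_sylvester Mpart_add_cadj)

lemma Ppart_eq_0_if_g_comm:
  assumes "g z = comm (cadj (Mpart g z)) z"
  shows "Ppart g z = 0"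
proof -
  have "z ** (Mpart g z + cadj (Mpart g z)) = 0"
    using g_eq_Mpart_sylvester assms
    by (simp add: comm_def matrix_add_ldistrib add.commute neg_eq_iff_add_eq_0)
  then show ?thesis
    using invertible_mult_left_eq_0_iff[OF z_inv, of "Ppart g z"] by (simp add: Mpart_add_cadj)
qed

end

lemma power2_norm_add_scaleR:
  fixes x y :: "'a::real_inner"
  shows "(norm (x + c *\<^sub>R y))\<^sup>2 = (norm x)\<^sup>2 + 2 * c * inner (x + (c / 2) *\<^sub>R y) y"
  unfolding power2_norm_eq_inner
  by (simp add: inner_add_left inner_add_right inner_commute algebra_simps)

lemma power2_norm_rk_update:
  fixes z0 :: "'a::real_inner" and G Y :: "nat \<Rightarrow> 'a"
  assumes "\<And>i. i \<in> {1..s} \<Longrightarrow> Y i = z0 + h *\<^sub>R (\<Sum>j=1..<i. b j *\<^sub>R G j) + (h / 2 * b i) *\<^sub>R G i"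
  shows "(norm (z0 + h *\<^sub>R (\<Sum>i=1..s. b i *\<^sub>R G i)))\<^sup>2
           = (norm z0)\<^sup>2 + 2 * h * (\<Sum>i=1..s. b i * inner (Y i) (G i))"
  using assms
proof (induction s)
  case 0
  then show ?case by simp
next
  case (Suc s)
  define S where "S = z0 + h *\<^sub>R (\<Sum>i=1..s. b i *\<^sub>R G i)"
  let ?c = "h * b (Suc s)"
  have "(norm S)\<^sup>2 = (norm z0)\<^sup>2 + 2 * h * (\<Sum>i=1..s. b i * inner (Y i) (G i))"
    using Suc by (simp add: S_def)
  moreover have "Y (Suc s) = S + (?c / 2) *\<^sub>R G (Suc s)"
    using Suc.prems[of "Suc s"] by (simp add: S_def atLeastLessThanSuc_atLeastAtMost)
  moreover have "z0 + h *\<^sub>R (\<Sum>i=1..Suc s. b i *\<^sub>R G i) = S + ?c *\<^sub>R G (Suc s)"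
    by (simp add: S_def algebra_simps)
  ultimately show ?case
    by (simp only: power2_norm_add_scaleR) (simp add: algebra_simps)
qed

lemma half_norm_square_rk_corrected:
  fixes z0 z1 :: "'a::real_inner" and G W Z :: "nat \<Rightarrow> 'a"
  assumes stage: "\<And>i. i \<in> {1..s} \<Longrightarrow>
      Z i = z0 + h *\<^sub>R (\<Sum>j=1..<i. b j *\<^sub>R G j) + (h / 2 * b i) *\<^sub>R G i - (h^2 / 4 * (b i)^2) *\<^sub>R W i"
    and update: "z1 = z0 + h *\<^sub>R (\<Sum>i=1..s. b i *\<^sub>R G i)"
  shows "(1/2) * (norm z1)\<^sup>2 = (1/2) * (norm z0)\<^sup>2 + h * (\<Sum>i=1..s. b i * inner (Z i) (G i))
           + h^3 / 4 * (\<Sum>i=1..s. (b i)^3 * inner (W i) (G i))"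
proof -
  define Y where "Y i = Z i + (h^2 / 4 * (b i)^2) *\<^sub>R W i" for i
  have "(norm z1)\<^sup>2 = (norm z0)\<^sup>2 + 2 * h * (\<Sum>i=1..s. b i * inner (Y i) (G i))"
    unfolding update by (rule power2_norm_rk_update) (simp add: Y_def stage)
  also have "(\<Sum>i=1..s. b i * inner (Y i) (G i))
      = (\<Sum>i=1..s. b i * inner (Z i) (G i)) + h^2 / 4 * (\<Sum>i=1..s. (b i)^3 * inner (W i) (G i))"
    by (simp add: Y_def inner_add_left sum.distrib sum_distrib_left power2_eq_square power3_eq_cube
        algebra_simps)
  finally show ?thesis
    by (simp add: power2_eq_square power3_eq_cube algebra_simps)
qed

lemma rk_energy_identity:
  fixes g :: "'n::finite cmat \<Rightarrow> 'n cmat" and b :: "nat \<Rightarrow> real"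
    and z0 z1 :: "'n cmat" and Z :: "nat \<Rightarrow> 'n cmat"
  assumes Z_skew: "\<And>i. i \<in> {1..s} \<Longrightarrow> skew_hermitian (Z i)"
    and Z_inv: "\<And>i. i \<in> {1..s} \<Longrightarrow> invertible (Z i)"
    and g_skew: "\<And>i. i \<in> {1..s} \<Longrightarrow> skew_hermitian (g (Z i))"
    and stage: "\<And>i. i \<in> {1..s} \<Longrightarrow>
       Z i = z0 + h *\<^sub>R (\<Sum>j=1..<i. b j *\<^sub>R g (Z j)) + (h / 2 * b i) *\<^sub>R g (Z i)
               - (h^2 / 4 * (b i)^2) *\<^sub>R (cadj (Mpart g (Z i)) ** Z i ** Mpart g (Z i))"
    and update: "z1 = z0 + h *\<^sub>R (\<Sum>i=1..s. b i *\<^sub>R g (Z i))"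
  shows "complex_of_real ((1/2) * (frob_norm z1)^2) =
           complex_of_real ((1/2) * (frob_norm z0)^2)
           - complex_of_real h * (\<Sum>i=1..s. complex_of_real (b i) *
                 trace (Z i ** Ppart g (Z i) ** Z i))
           - complex_of_real (h^3 / 4) * (\<Sum>i=1..s. complex_of_real ((b i)^3) *
                 trace (cadj (Mpart g (Z i)) ** Z i ** Ppart g (Z i) ** Z i ** Mpart g (Z i)))"
proof -
  note stage_facts = Z_skew Z_inv g_skew
  have "complex_of_real (\<Sum>i=1..s. b i * inner (Z i) (g (Z i)))
      = - (\<Sum>i=1..s. complex_of_real (b i) * trace (Z i ** Ppart g (Z i) ** Z i))"
    and "complex_of_real (\<Sum>i=1..s. (b i)^3 * inner (cadj (Mpart g (Z i)) ** Z i ** Mpart g (Z i)) (g (Z i)))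
      = - (\<Sum>i=1..s. complex_of_real ((b i)^3)
             * trace (cadj (Mpart g (Z i)) ** Z i ** Ppart g (Z i) ** Z i ** Mpart g (Z i)))"
    unfolding of_real_sum sum_negf[symmetric]
    by (rule sum.cong; simp add: inner_g_eq_trace_Ppart[where g = g, OF stage_facts]
        inner_sandwich_g_eq_trace_Ppart[where g = g, OF stage_facts])+
  moreover note half_norm_square_rk_corrected[OF stage update]
  ultimately show ?thesis
    by (simp add: frob_norm_eq_norm)
qed

theorem proposition4p4:
  fixes g :: "'n::finite cmat \<Rightarrow> 'n cmat"
    and b :: "nat \<Rightarrow> real" and h :: real and s :: nat
    and z0 z1 :: "'n cmat" and Z :: "nat \<Rightarrow> 'n cmat"
  assumes g_field: "\<And>z. skew_hermitian z \<Longrightarrow> skew_hermitian (g z)"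
    and h_pos: "h > 0"
    and z0_sk: "skew_hermitian z0" and z1_sk: "skew_hermitian z1"
    and Z_sk: "\<And>i. i \<in> {1..s} \<Longrightarrow> skew_hermitian (Z i)"
    and Z_eig: "\<And>i. i \<in> {1..s} \<Longrightarrow> distinct_nonzero_eigs (Z i)"
    and stage: "\<And>i. i \<in> {1..s} \<Longrightarrow>
       Z i = z0 + h *\<^sub>R (\<Sum>j=1..<i. b j *\<^sub>R g (Z j))
               + (h / 2 * b i) *\<^sub>R g (Z i)
               - (h^2 / 4 * (b i)^2) *\<^sub>R (cadj (Mpart g (Z i)) ** Z i ** Mpart g (Z i))"
    and update: "z1 = z0 + h *\<^sub>R (\<Sum>i=1..s. b i *\<^sub>R g (Z i))"
  shows "complex_of_real ((1/2) * (frob_norm z1)^2) =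
           complex_of_real ((1/2) * (frob_norm z0)^2)
           - complex_of_real h * (\<Sum>i=1..s. complex_of_real (b i) *
                 trace (Z i ** Ppart g (Z i) ** Z i))
           - complex_of_real (h^3 / 4) * (\<Sum>i=1..s. complex_of_real ((b i)^3) *
                 trace (cadj (Mpart g (Z i)) ** Z i ** Ppart g (Z i) ** Z i ** Mpart g (Z i)))
         \<and> ((\<forall>i\<in>{1..s}. g (Z i) = comm (cadj (Mpart g (Z i))) (Z i))
              \<longrightarrow> frob_norm z1 = frob_norm z0)"
proof -
  have Z_inv: "invertible (Z i)" if "i \<in> {1..s}" for i
    using Z_eig[OF that] by (simp add: distinct_nonzero_eigs_def invertible_if_not_eigenvalue_0)
  note energy = rk_energy_identity[OF Z_sk Z_inv g_field[OF Z_sk] stage update]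
  moreover have "frob_norm z1 = frob_norm z0"
    if g_comm: "\<forall>i\<in>{1..s}. g (Z i) = comm (cadj (Mpart g (Z i))) (Z i)"
  proof -
    have "Ppart g (Z i) = 0" if "i \<in> {1..s}" for i
      using Ppart_eq_0_if_g_comm[where g = g, OF Z_sk[OF that] Z_inv[OF that] g_field[OF Z_sk[OF that]]]
        that g_comm
      by blast
    with energy have "(frob_norm z1)\<^sup>2 = (frob_norm z0)\<^sup>2"
      by (simp add: trace_def flip: of_real_power)
    then show ?thesis
      by (simp add: frob_norm_eq_norm power2_eq_iff_nonneg)
  qed
  ultimately show ?thesis
    by blast
qed

end
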